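(* For every real number $r\ge 1$, the function $f_r:[0,1]\to\mathbb{R}$ defined by $$f_r(x):=\sum_{m\in\mathbb{Z}}\Big|\frac{\sin(\pi(x+m))}{\pi(x+m)}\Big|^{2r},\qquad x\in[0,1],$$ attains its global minimum on $[0,1]$ at $x=\tfrac12$.
   Context: The summands have removable singularities (at $x+m=0$); each is understood to be its unique continuous extension (so the summand equals $1$ when $x+m=0$). *)

theory Defs
  imports "HOL-Analysis.Analysis"
begin

definition sinc_pi :: "real \<Rightarrow> real" where
  "sinc_pi t = (if t = 0 then 1 else sin (pi * t) / (pi * t))"

definition f_r :: "real \<Rightarrow> real \<Rightarrow> real" where
  "f_r r x = (\<Sum>\<^sub>\<infinity>m\<in>(UNIV::int set). \<bar>sinc_pi (x + of_int m)\<bar> powr (2 * r))"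

end

theory Submission
  imports Defs
begin

text \<open>
  For \<open>0 < x < 1\<close> the terms of \<open>f_r x\<close> are \<open>a\<^sub>k(x)\<^sup>r\<close>, where \<open>a\<^sub>k(x) = sin\<^sup>2(\<pi>x) / (\<pi> d\<^sub>k)\<^sup>2\<close> and
  \<open>d\<^sub>0 = x, d\<^sub>1 = 1 - x, d\<^sub>2 = 1 + x, \<dots>\<close> are the distances from \<open>x\<close> to the integers.
  By the partial fraction expansion of \<open>\<pi>\<^sup>2 / sin\<^sup>2(\<pi>x)\<close> we have \<open>\<Sum>\<^sub>k a\<^sub>k(x) = 1\<close> for all \<open>x\<close>;
  grouping the terms in pairs, one checks that every pair except the first is largest at
  \<open>x = 1/2\<close>. Hence for \<open>0 < x \<le> 1/2\<close> the decreasing sequence \<open>a\<^sub>k(1/2)\<close> is weakly majorized by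
  \<open>a\<^sub>k(x)\<close>, and since \<open>t \<mapsto> t\<^sup>r\<close> is convex and increasing, summation by parts gives
  \<open>\<Sum>\<^sub>k a\<^sub>k(1/2)\<^sup>r \<le> \<Sum>\<^sub>k a\<^sub>k(x)\<^sup>r\<close>. The symmetry \<open>f_r(1 - x) = f_r(x)\<close> and \<open>f_r(0) = f_r(1) = 1\<close>
  cover the remaining points.
\<close>

section \<open>The partial fraction expansion of \<open>\<pi>\<^sup>2 / sin\<^sup>2(\<pi>x)\<close>\<close>

lemma Gamma_reflection_real:
  fixes x :: real
  assumes "x \<notin> \<int>"
  shows "Gamma x * Gamma (1 - x) = pi / sin (pi * x)"
proof -
  from Gamma_reflection_complex[of "complex_of_real x"]
  have "complex_of_real (Gamma x * Gamma (1 - x)) = complex_of_real (pi / sin (pi * x))"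
    by (simp add: Gamma_complex_of_real[symmetric] sin_of_real[symmetric])
  thus ?thesis by (simp only: of_real_eq_iff)
qed

lemma ln_Gamma_reflection:
  fixes x :: real
  assumes "0 < x" "x < 1"
  shows "ln_Gamma x + ln_Gamma (1 - x) = ln pi - ln (sin (pi * x))"
proof -
  have "x \<notin> \<int>"
    using assms by (auto elim!: Ints_cases)
  have "sin (pi * x) > 0"
    using assms by (intro sin_gt_zero) auto
  have "Gamma x > 0" "Gamma (1 - x) > 0"
    using assms by (simp_all add: Gamma_real_pos)
  have "ln_Gamma x + ln_Gamma (1 - x) = ln (Gamma x * Gamma (1 - x))"
    using assms ln_mult_pos[OF \<open>Gamma x > 0\<close> \<open>Gamma (1 - x) > 0\<close>] by (simp add: ln_Gamma_real_pos)
  also have "\<dots> = ln pi - ln (sin (pi * x))"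
    using Gamma_reflection_real[OF \<open>x \<notin> \<int>\<close>] \<open>sin (pi * x) > 0\<close> by (simp add: ln_div)
  finally show ?thesis .
qed

text \<open>The reflection formulas for \<open>\<psi>\<close> and \<open>\<psi>'\<close> are obtained by differentiating the previous one.\<close>

lemma Digamma_reflection_real:
  fixes x :: real
  assumes "0 < x" "x < 1"
  shows "Digamma x - Digamma (1 - x) + pi * cos (pi * x) / sin (pi * x) = 0"
proof -
  define F where "F y = ln_Gamma y + ln_Gamma (1 - y) + ln (sin (pi * y))" for y :: real
  have "sin (pi * x) > 0" using assms by (intro sin_gt_zero) auto
  hence "(F has_real_derivative Digamma x - Digamma (1 - x) + pi * cos (pi * x) / sin (pi * x)) (at x)"
    unfolding F_def using assms by (auto intro!: derivative_eq_intros simp: field_simps)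
  moreover have "\<forall>y. \<bar>x - y\<bar> < min x (1 - x) \<longrightarrow> F x = F y"
    unfolding F_def using ln_Gamma_reflection assms by (smt (verit, best))
  ultimately show ?thesis
    by (intro DERIV_local_const[where d = "min x (1 - x)"]) (use assms in auto)
qed

lemma Polygamma_1_reflection_real:
  fixes x :: real
  assumes "0 < x" "x < 1"
  shows "Polygamma 1 x + Polygamma 1 (1 - x) = pi^2 / sin (pi * x)^2"
proof -
  define F where "F y = Digamma y - Digamma (1 - y) + pi * cos (pi * y) / sin (pi * y)" for y :: real
  have "sin (pi * x) > 0" using assms by (intro sin_gt_zero) auto
  moreover have "x \<notin> \<int>\<^sub>\<le>\<^sub>0" "1 - x \<notin> \<int>\<^sub>\<le>\<^sub>0" using assms nonpos_Ints_nonpos by force+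
  ultimately have "(F has_real_derivative Polygamma 1 x + Polygamma 1 (1 - x) - pi^2 / sin (pi * x)^2) (at x)"
    unfolding F_def
    by (auto intro!: derivative_eq_intros simp: field_simps) (use sin_cos_squared_add[of "pi * x"] in algebra)
  moreover have "\<forall>y. \<bar>x - y\<bar> < min x (1 - x) \<longrightarrow> F x = F y"
    unfolding F_def using Digamma_reflection_real assms by (smt (verit, best))
  ultimately have "Polygamma 1 x + Polygamma 1 (1 - x) - pi^2 / sin (pi * x)^2 = 0"
    by (intro DERIV_local_const[where d = "min x (1 - x)"]) (use assms in auto)
  thus ?thesis by simp
qed

lemma Polygamma_1_sums:
  fixes x :: real
  assumes "x > 0"
  shows "(\<lambda>k. 1 / (real k + x)^2) sums Polygamma 1 x"
proof -
  have "summable (\<lambda>k. inverse ((x + of_nat k)^2))"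
    using Polygamma_converges'[of x 2] assms by simp
  moreover have "Polygamma 1 x = (\<Sum>k. inverse ((x + of_nat k)^2))"
    by (simp add: Polygamma_def power2_eq_square)
  ultimately show ?thesis
    by (simp add: summable_sums add.commute inverse_eq_divide)
qed

definition inverse_square_pair :: "real \<Rightarrow> nat \<Rightarrow> real" where
  "inverse_square_pair x j = 1 / (real j + x)^2 + 1 / (real j + 1 - x)^2"

lemma inverse_square_pair_sums:
  fixes x :: real
  assumes "0 < x" "x < 1"
  shows "inverse_square_pair x sums (pi^2 / sin (pi * x)^2)"
proof -
  have "(\<lambda>k. 1 / (real k + x)^2 + 1 / (real k + (1 - x))^2) sums (Polygamma 1 x + Polygamma 1 (1 - x))"
    by (intro sums_add Polygamma_1_sums) (use assms in auto)
  thus ?thesis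
    using Polygamma_1_reflection_real[OF assms] unfolding inverse_square_pair_def
    by (simp add: algebra_simps)
qed

lemma sin_pi_ge_Jordan:
  fixes t :: real
  assumes "0 \<le> t" "t \<le> 1/2"
  shows "2 * t \<le> sin (pi * t)"
proof -
  have "convex_on {0..pi} (\<lambda>y. - sin y)"
    by (rule f''_ge0_imp_convex[where f' = "\<lambda>y. - cos y" and f'' = "\<lambda>y. sin y"])
       (auto intro!: derivative_eq_intros sin_ge_zero)
  from convex_onD[OF this, of "2 * t" 0 "pi / 2"] assms
  show ?thesis by (simp add: algebra_simps)
qed

lemma sin_pi_squared_le:
  fixes x :: real
  assumes "0 \<le> x" "x \<le> 1"
  shows "sin (pi * x)^2 \<le> 1 - 4 * (x - 1/2)^2"
proof -
  define t where "t = \<bar>x - 1/2\<bar>"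
  have t: "0 \<le> t" "t \<le> 1/2"
    using assms unfolding t_def by (auto simp: abs_if)
  have "sin (pi * x)^2 = cos (pi * t)^2"
    unfolding t_def by (cases "x \<le> 1/2") (simp_all add: algebra_simps sin_add cos_diff)
  also have "\<dots> = 1 - sin (pi * t)^2"
    by (simp add: cos_squared_eq)
  also have "\<dots> \<le> 1 - (2 * t)^2"
    using power_mono[OF sin_pi_ge_Jordan[OF t], of 2] t by simp
  finally show ?thesis
    unfolding t_def by (simp add: power_mult_distrib)
qed

lemma one_minus_four_squared_mult_inverse_squares_le:
  fixes c t :: real
  assumes "1 \<le> c" "\<bar>t\<bar> \<le> 1/2"
  shows "(1 - 4 * t^2) * (1 / (c + t)^2 + 1 / (c - t)^2) \<le> 2 / c^2"
proof -
  have "c + t > 0" "c - t > 0"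
    using assms by auto
  hence "1 / (c + t)^2 + 1 / (c - t)^2 = ((c - t)^2 + (c + t)^2) / ((c + t)^2 * (c - t)^2)"
    by (simp add: field_simps)
  also have "\<dots> = (2 * c^2 + 2 * t^2) / (c^2 - t^2)^2"
    by (simp add: power2_eq_square algebra_simps)
  finally have sum_eq: "1 / (c + t)^2 + 1 / (c - t)^2 = (2 * c^2 + 2 * t^2) / (c^2 - t^2)^2" .
  have "2 * (c^2 - t^2)^2 - (1 - 4 * t^2) * (2 * c^2 + 2 * t^2) * c^2
          = 2 * t^2 * (4 * c^2 * c^2 - 3 * c^2 + 4 * c^2 * t^2 + t^2)"
    by (simp add: algebra_simps power2_eq_square)
  also have "\<dots> \<ge> 0"
  proof -
    have "1 \<le> c^2"
      using assms by (simp add: one_le_power)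
    hence "3 * c^2 \<le> 4 * c^2 * c^2"
      using mult_right_mono[of 1 "c^2" "c^2"] by linarith
    thus ?thesis
      by (intro mult_nonneg_nonneg) (simp_all add: add_nonneg_nonneg)
  qed
  finally have "(1 - 4 * t^2) * (2 * c^2 + 2 * t^2) * c^2 / ((c^2 - t^2)^2 * c^2)
      \<le> 2 * (c^2 - t^2)^2 / ((c^2 - t^2)^2 * c^2)"
    by (intro divide_right_mono) simp_all
  moreover have "c^2 - t^2 = (c + t) * (c - t)"
    by (simp add: algebra_simps power2_eq_square)
  hence "(c^2 - t^2)^2 > 0" "c^2 > 0"
    using \<open>c + t > 0\<close> \<open>c - t > 0\<close> assms by simp_all
  ultimately show ?thesis
    by (simp add: sum_eq)
qed

lemma sin_squared_mult_inverse_square_pair_le: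
  fixes x :: real
  assumes "1 \<le> j" "0 \<le> x" "x \<le> 1"
  shows "sin (pi * x)^2 * inverse_square_pair x j \<le> inverse_square_pair (1/2) j"
proof -
  define c where "c = real j + 1/2"
  define t where "t = x - 1/2"
  have pair_eq: "inverse_square_pair x j = 1 / (c + t)^2 + 1 / (c - t)^2"
    unfolding inverse_square_pair_def c_def t_def by (simp add: algebra_simps)
  have "sin (pi * x)^2 * inverse_square_pair x j \<le> (1 - 4 * t^2) * inverse_square_pair x j"
    using sin_pi_squared_le[OF assms(2,3)] unfolding t_def
    by (intro mult_right_mono) (auto simp: inverse_square_pair_def)
  also have "\<dots> \<le> 2 / c^2"
    unfolding pair_eq using assms
    by (intro one_minus_four_squared_mult_inverse_squares_le) (auto simp: c_def t_def abs_if)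
  also have "\<dots> = inverse_square_pair (1/2) j"
    unfolding inverse_square_pair_def c_def by (simp add: algebra_simps)
  finally show ?thesis .
qed

section \<open>Sums and weak majorization\<close>

lemma sum_lessThan_double:
  fixes f :: "nat \<Rightarrow> 'a::comm_monoid_add"
  shows "(\<Sum>k<2 * n. f k) = (\<Sum>j<n. f (2 * j) + f (2 * j + 1))"
  by (induction n) (auto simp: algebra_simps)

lemma sums_le_sum_lessThan_if_nonpos:
  fixes d :: "nat \<Rightarrow> real"
  assumes "d sums s" "\<And>j. n \<le> j \<Longrightarrow> d j \<le> 0"
  shows "s \<le> (\<Sum>j<n. d j)"
proof -
  have "summable d" "s = suminf d"
    using assms(1) by (auto simp: sums_iff)
  hence "s = (\<Sum>i. d (i + n)) + (\<Sum>j<n. d j)"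
    by (simp add: suminf_split_initial_segment)
  moreover have "(\<Sum>i. d (i + n)) \<le> 0"
    using assms(2) summable_ignore_initial_segment[OF \<open>summable d\<close>, of n]
    by (intro suminf_le_const sum_nonpos) auto
  ultimately show ?thesis by simp
qed

lemma powr_diff_ge_tangent:
  fixes a b r :: real
  assumes "0 < a" "0 < b" "1 \<le> r"
  shows "r * b powr (r - 1) * (a - b) \<le> a powr r - b powr r"
  using assms
  by (intro f''_imp_f'[where C = "{0<..}" and f = "\<lambda>y. y powr r"
        and f'' = "\<lambda>y. r * (r - 1) * y powr (r - 2)"])
     (auto intro!: derivative_eq_intros simp: algebra_simps)

lemma sum_mult_nonneg_if_antimono:
  fixes w c :: "nat \<Rightarrow> real"
  assumes "\<And>k. w (Suc k) \<le> w k" "\<And>k. 0 \<le> w k" "\<And>n. 0 \<le> (\<Sum>k<n. c k)"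
  shows "0 \<le> (\<Sum>k<N. w k * c k)"
proof -
  have Abel: "(\<Sum>k<N. w k * c k)
      = w N * (\<Sum>k<N. c k) + (\<Sum>k<N. (w k - w (Suc k)) * (\<Sum>i<Suc k. c i))"
    by (induction N) (auto simp: algebra_simps)
  have "0 \<le> (w k - w (Suc k)) * (\<Sum>i<Suc k. c i)" for k
    using assms(1)[of k] assms(3)[of "Suc k"] by simp
  thus ?thesis
    unfolding Abel using assms by (intro add_nonneg_nonneg sum_nonneg) auto
qed

text \<open>
  Only \<open>b\<close> has to be decreasing: the tangent line of \<open>t\<^sup>r\<close> at \<open>b\<^sub>k\<close> has slope \<open>r b\<^sub>k\<^sup>r\<^sup>-\<^sup>1\<close>, which decreases in \<open>k\<close>.
\<close>

lemma sum_powr_le_if_weakly_majorized: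
  fixes a b :: "nat \<Rightarrow> real"
  assumes "\<And>k. 0 < a k" "\<And>k. 0 < b k" "\<And>k. b (Suc k) \<le> b k"
    and "\<And>n. (\<Sum>k<n. b k) \<le> (\<Sum>k<n. a k)" and "1 \<le> r"
  shows "(\<Sum>k<N. b k powr r) \<le> (\<Sum>k<N. a k powr r)"
proof -
  have "0 \<le> (\<Sum>k<N. r * b k powr (r - 1) * (a k - b k))"
    using assms less_imp_le[OF assms(2)]
    by (intro sum_mult_nonneg_if_antimono) (auto intro!: mult_left_mono powr_mono2 simp: sum_subtractf)
  also have "\<dots> \<le> (\<Sum>k<N. a k powr r - b k powr r)"
    using assms by (intro sum_mono powr_diff_ge_tangent) auto
  finally show ?thesis
    by (simp add: sum_subtractf)
qed

section \<open>The terms of \<open>f_r\<close>\<close>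

text \<open>
  For \<open>0 < x < 1\<close>, \<open>sinc_squared_seq x k\<close> is \<open>sinc_pi (x + m)\<^sup>2\<close> for the \<open>k\<close>-th integer \<open>m\<close> in
  the order \<open>0, -1, 1, -2, 2, \<dots>\<close>; the denominator is \<open>\<pi>\<^sup>2 \<bar>x + m\<bar>\<^sup>2\<close>.
\<close>

definition int_enum :: "nat \<Rightarrow> int" where
  "int_enum k = (if even k then int (k div 2) else - int (k div 2) - 1)"

definition sinc_squared_seq :: "real \<Rightarrow> nat \<Rightarrow> real" where
  "sinc_squared_seq x k =
     sin (pi * x)^2 / (pi^2 * (if even k then real (k div 2) + x else real (k div 2) + 1 - x)^2)"

lemma sinc_squared_seq_pos:
  assumes "0 < x" "x < 1"
  shows "0 < sinc_squared_seq x k"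
  using assms sin_gt_zero[of "pi * x"] by (simp add: sinc_squared_seq_def)

lemma sinc_squared_seq_pair:
  "sinc_squared_seq x (2 * j) + sinc_squared_seq x (2 * j + 1)
     = sin (pi * x)^2 * inverse_square_pair x j / pi^2"
  by (simp add: sinc_squared_seq_def inverse_square_pair_def field_simps)

lemma sum_sinc_squared_seq_le_1:
  assumes "0 < x" "x < 1"
  shows "(\<Sum>k<N. sinc_squared_seq x k) \<le> 1"
proof -
  have "(\<Sum>k<N. sinc_squared_seq x k) \<le> (\<Sum>k<2 * N. sinc_squared_seq x k)"
    using sinc_squared_seq_pos[OF assms] by (intro sum_mono2) (auto simp: less_imp_le)
  also have "\<dots> = sin (pi * x)^2 / pi^2 * (\<Sum>j<N. inverse_square_pair x j)"
    by (simp only: sum_lessThan_double sinc_squared_seq_pair) (simp add: sum_distrib_left)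
  also have "\<dots> \<le> sin (pi * x)^2 / pi^2 * (pi^2 / sin (pi * x)^2)"
    using inverse_square_pair_sums[OF assms] sum_le_suminf[of "inverse_square_pair x" "{..<N}"]
    by (intro mult_left_mono) (auto simp: sums_iff inverse_square_pair_def)
  also have "\<dots> \<le> 1"
    by simp
  finally show ?thesis .
qed

lemma sinc_squared_seq_le_1:
  assumes "0 < x" "x < 1"
  shows "sinc_squared_seq x k \<le> 1"
proof -
  have "sinc_squared_seq x k \<le> (\<Sum>i<Suc k. sinc_squared_seq x i)"
    using sinc_squared_seq_pos[OF assms] by (intro member_le_sum) (auto simp: less_imp_le)
  also have "\<dots> \<le> 1"
    by (rule sum_sinc_squared_seq_le_1[OF assms])
  finally show ?thesis .
qed

lemma summable_sinc_squared_seq_powr: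
  assumes "0 < x" "x < 1" "1 \<le> r"
  shows "summable (\<lambda>k. sinc_squared_seq x k powr r)"
proof (rule summable_comparison_test)
  have "summable (sinc_squared_seq x)"
    using sum_sinc_squared_seq_le_1[OF assms(1,2)] sinc_squared_seq_pos[OF assms(1,2)]
    by (intro summableI_nonneg_bounded[where x = 1]) (auto simp: less_imp_le)
  thus "summable (sinc_squared_seq x)"
    and "\<exists>N. \<forall>n\<ge>N. norm (sinc_squared_seq x n powr r) \<le> sinc_squared_seq x n"
    using sinc_squared_seq_pos[OF assms(1,2)] sinc_squared_seq_le_1[OF assms(1,2)] assms(3)
    by (auto intro!: powr_le_one_le)
qed

lemma sinc_squared_seq_half_antimono:
  "sinc_squared_seq (1/2) (Suc k) \<le> sinc_squared_seq (1/2) k"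
  by (auto simp: sinc_squared_seq_def elim!: oddE intro!: divide_left_mono mult_pos_pos power_mono)

lemma sinc_squared_seq_odd_le:
  assumes "x \<le> 1/2"
  shows "sinc_squared_seq x (2 * j + 1) \<le> sinc_squared_seq (1/2) (2 * j + 1)"
proof -
  have "sinc_squared_seq x (2 * j + 1) = sin (pi * x)^2 / (pi^2 * (real j + 1 - x)^2)"
    by (simp add: sinc_squared_seq_def)
  also have "\<dots> \<le> 1 / (pi^2 * (real j + 1 - x)^2)"
    by (intro divide_right_mono) (auto simp: abs_square_le_1)
  also have "\<dots> \<le> 1 / (pi^2 * (real j + 1/2)^2)"
    using assms by (intro divide_left_mono mult_left_mono mult_pos_pos power_mono) auto
  also have "\<dots> = sinc_squared_seq (1/2) (2 * j + 1)"
    by (simp add: sinc_squared_seq_def)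
  finally show ?thesis .
qed

text \<open>
  The pairs \<open>j \<ge> 1\<close> only lose in passing from \<open>1/2\<close> to \<open>x\<close>, while the total \<open>1\<close> is preserved;
  hence the even partial sums of the differences are nonnegative, and the odd terms do not
  spoil this.
\<close>

lemma sum_sinc_squared_seq_half_le:
  assumes "0 < x" "x \<le> 1/2"
  shows "(\<Sum>k<N. sinc_squared_seq (1/2) k) \<le> (\<Sum>k<N. sinc_squared_seq x k)"
proof -
  define D where "D j = sin (pi * x)^2 * inverse_square_pair x j - inverse_square_pair (1/2) j" for j
  define \<delta> where "\<delta> k = sinc_squared_seq x k - sinc_squared_seq (1/2) k" for k
  have x: "0 < x" "x < 1"
    using assms by auto
  have "D sums (sin (pi * x)^2 * (pi^2 / sin (pi * x)^2) - pi^2 / sin (pi * (1/2))^2)"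
    unfolding D_def by (intro sums_diff sums_mult inverse_square_pair_sums) (use x in auto)
  hence "D sums 0"
    using sin_gt_zero[of "pi * x"] x by simp
  have D_sum: "0 \<le> (\<Sum>j<n. D j)" for n
  proof (cases "n = 0")
    case False
    thus ?thesis
      using sums_le_sum_lessThan_if_nonpos[OF \<open>D sums 0\<close>, of n] x
        sin_squared_mult_inverse_square_pair_le
      by (force simp: D_def)
  qed simp
  have even: "0 \<le> (\<Sum>k<2 * n. \<delta> k)" for n
  proof -
    have "(\<Sum>k<2 * n. \<delta> k) = (\<Sum>j<n. D j) / pi^2"
      by (simp only: sum_lessThan_double \<delta>_def add_diff_add[symmetric] sinc_squared_seq_pair)
         (simp add: D_def sum_divide_distrib diff_divide_distrib)
    thus ?thesis
      using D_sum by simp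
  qed
  have "0 \<le> (\<Sum>k<N. \<delta> k)"
  proof (cases "even N")
    case True
    thus ?thesis using even by (auto elim!: evenE)
  next
    case False
    then obtain n where N: "N = 2 * n + 1"
      by (auto elim!: oddE)
    have "(\<Sum>k<N. \<delta> k) = (\<Sum>k<2 * (n + 1). \<delta> k) - \<delta> (2 * n + 1)"
      by (simp add: N)
    thus ?thesis
      using even[of "n + 1"] sinc_squared_seq_odd_le[OF assms(2), of n] by (simp add: \<delta>_def)
  qed
  thus ?thesis
    by (simp add: \<delta>_def sum_subtractf)
qed

lemma bij_int_enum: "bij_betw int_enum UNIV UNIV"
proof (rule bij_betw_byWitness[where f' = "\<lambda>m. if 0 \<le> m then 2 * nat m else 2 * nat (- m - 1) + 1"])
  show "\<forall>k\<in>UNIV. (if 0 \<le> int_enum k then 2 * nat (int_enum k) else 2 * nat (- int_enum k - 1) + 1) = k"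
    unfolding int_enum_def by (auto elim: oddE)
qed (auto simp: int_enum_def)

lemma abs_sinc_pi_powr_eq_sinc_squared_seq:
  assumes "0 < x" "x < 1"
  shows "\<bar>sinc_pi (x + of_int (int_enum k))\<bar> powr (2 * r) = sinc_squared_seq x k powr r"
proof -
  define y where "y = x + of_int (int_enum k)"
  have y_sq: "y^2 = (if even k then real (k div 2) + x else real (k div 2) + 1 - x)^2"
    unfolding y_def int_enum_def by (auto simp: power2_eq_square algebra_simps)
  hence "y \<noteq> 0"
    using assms by (auto split: if_splits)
  have "sin (pi * y)^2 = sin (pi * x)^2"
    using sin_times_pi_eq_0[of "of_int (int_enum k)"] sin_cos_squared_add[of "of_int (int_enum k) * pi"]
    by (simp add: y_def distrib_left sin_add power_mult_distrib algebra_simps)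
  hence "sinc_pi y ^ 2 = sinc_squared_seq x k"
    using \<open>y \<noteq> 0\<close> y_sq
    by (simp add: sinc_pi_def sinc_squared_seq_def power_divide power_mult_distrib)
  thus ?thesis
    unfolding y_def[symmetric] by (simp add: powr_powr[symmetric])
qed

lemma f_r_eq_suminf_sinc_squared_seq:
  assumes "0 < x" "x < 1" "1 \<le> r"
  shows "f_r r x = (\<Sum>k. sinc_squared_seq x k powr r)"
proof -
  have "f_r r x = infsum (\<lambda>k. \<bar>sinc_pi (x + of_int (int_enum k))\<bar> powr (2 * r)) UNIV"
    unfolding f_r_def by (rule infsum_reindex_bij_betw[OF bij_int_enum, symmetric])
  also have "\<dots> = infsum (\<lambda>k. sinc_squared_seq x k powr r) UNIV"
    using abs_sinc_pi_powr_eq_sinc_squared_seq[OF assms(1,2)] by simp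
  also have "\<dots> = (\<Sum>k. sinc_squared_seq x k powr r)"
    using summable_sinc_squared_seq_powr[OF assms]
    by (intro infsumI sums_nonneg_imp_has_sum summable_sums) auto
  finally show ?thesis .
qed

lemma f_r_0: "f_r r 0 = 1"
proof -
  have "f_r r 0 = infsum (\<lambda>m::int. \<bar>sinc_pi (0 + of_int m)\<bar> powr (2 * r)) {0}"
    unfolding f_r_def
    by (rule infsum_cong_neutral) (auto simp: sinc_pi_def sin_times_pi_eq_0 mult.commute)
  thus ?thesis
    by (simp add: sinc_pi_def)
qed

lemma sinc_pi_minus: "sinc_pi (- y) = sinc_pi y"
  by (simp add: sinc_pi_def)

lemma f_r_reflect: "f_r r (1 - x) = f_r r x"
proof -
  have "bij_betw (\<lambda>m::int. -1 - m) UNIV UNIV"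
    by (rule bij_betw_byWitness[where f' = "\<lambda>m. -1 - m"]) auto
  hence "f_r r x = infsum (\<lambda>m. \<bar>sinc_pi (x + of_int (-1 - m))\<bar> powr (2 * r)) UNIV"
    unfolding f_r_def by (rule infsum_reindex_bij_betw[symmetric])
  also have "\<dots> = f_r r (1 - x)"
    unfolding f_r_def
  proof (rule infsum_cong)
    fix m :: int
    have "x + of_int (-1 - m) = - (1 - x + of_int m)"
      by simp
    thus "\<bar>sinc_pi (x + of_int (-1 - m))\<bar> powr (2 * r) = \<bar>sinc_pi (1 - x + of_int m)\<bar> powr (2 * r)"
      by (simp only: sinc_pi_minus)
  qed
  finally show ?thesis ..
qed

lemma f_r_half_le_1:
  assumes "1 \<le> r"
  shows "f_r r (1/2) \<le> 1"
proof -
  have half: "0 < (1/2::real)" "(1/2::real) < 1"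
    by auto
  have "(\<Sum>k<n. sinc_squared_seq (1/2) k powr r) \<le> 1" for n
  proof -
    have "(\<Sum>k<n. sinc_squared_seq (1/2) k powr r) \<le> (\<Sum>k<n. sinc_squared_seq (1/2) k)"
      using sinc_squared_seq_pos[OF half] sinc_squared_seq_le_1[OF half] assms
      by (intro sum_mono powr_le_one_le) (auto simp: less_imp_le)
    thus ?thesis
      using sum_sinc_squared_seq_le_1[OF half] by (rule order_trans)
  qed
  thus ?thesis
    using f_r_eq_suminf_sinc_squared_seq[OF half assms]
      suminf_le_const[OF summable_sinc_squared_seq_powr[OF half assms]] by simp
qed

lemma f_r_half_le:
  assumes "0 < x" "x \<le> 1/2" "1 \<le> r"
  shows "f_r r (1/2) \<le> f_r r x"
proof -
  have x: "0 < x" "x < 1" and half: "0 < (1/2::real)" "(1/2::real) < 1"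
    using assms by auto
  have "(\<Sum>k. sinc_squared_seq (1/2) k powr r) \<le> (\<Sum>k. sinc_squared_seq x k powr r)"
  proof (rule LIMSEQ_le)
    show "(\<lambda>n. \<Sum>k<n. sinc_squared_seq (1/2) k powr r) \<longlonglongrightarrow> (\<Sum>k. sinc_squared_seq (1/2) k powr r)"
      "(\<lambda>n. \<Sum>k<n. sinc_squared_seq x k powr r) \<longlonglongrightarrow> (\<Sum>k. sinc_squared_seq x k powr r)"
      using summable_sinc_squared_seq_powr[OF half assms(3)] summable_sinc_squared_seq_powr[OF x assms(3)]
      by (simp_all add: summable_LIMSEQ)
    show "\<exists>N. \<forall>n\<ge>N. (\<Sum>k<n. sinc_squared_seq (1/2) k powr r) \<le> (\<Sum>k<n. sinc_squared_seq x k powr r)"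
      using sinc_squared_seq_pos[OF x] sinc_squared_seq_pos[OF half] assms(3)
        sinc_squared_seq_half_antimono sum_sinc_squared_seq_half_le[OF assms(1,2)]
      by (blast intro: sum_powr_le_if_weakly_majorized)
  qed
  thus ?thesis
    using f_r_eq_suminf_sinc_squared_seq[OF x assms(3)] f_r_eq_suminf_sinc_squared_seq[OF half assms(3)]
    by simp
qed

theorem proposition2:
  fixes r :: real
  assumes "r \<ge> 1"
  shows "\<forall>x\<in>{0..1}. f_r r (1/2) \<le> f_r r x"
proof
  fix x :: real
  assume x: "x \<in> {0..1}"
  consider "x = 0 \<or> x = 1" | "0 < x" "x \<le> 1/2" | "1/2 \<le> x" "x < 1"
    using x by fastforce
  thus "f_r r (1/2) \<le> f_r r x"
  proof cases
    case 1
    thus ?thesis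
      using f_r_0 f_r_reflect[of r 0] f_r_half_le_1[OF assms] by auto
  next
    case 2
    thus ?thesis
      using f_r_half_le assms by blast
  next
    case 3
    thus ?thesis
      using f_r_half_le[of "1 - x" r] f_r_reflect[of r x] assms by simp
  qed
qed

end
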